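(* Let $s\in\mathbb N$, $n\in\mathbb N_0$, $0\le j\le n/2$ and $1\le\ell\le a^d_{n-2j}$. Then: (1) for $0\le k\le\lceil s/2\rceil-1$, $\Delta^kQ^{-s,n}_{j,\ell}(\xi)=\delta_{j,k}Y^{n-2j}_\ell(\xi)$ for all $\xi\in\mathbb S^{d-1}$; (2) if $s$ is even, $\Delta^{\lfloor s/2\rfloor}Q^{-s,n}_{j,\ell}(x)=2^s(n+\tfrac d2-s)_s\,P^{0,n-s}_{j-s/2,\ell}(x)$; (3) if $s$ is odd, $\Delta^{\lfloor s/2\rfloor}Q^{-s,n}_{j,\ell}(x)=2^{s-1}(n+\tfrac d2-s+1)_{s-1}P^{-1,n-s+1}_{j-\frac{s-1}2,\ell}(x)$ for $j\ne\lfloor s/2\rfloor$, and $\Delta^{\lfloor s/2\rfloor}Q^{-s,n}_{\lfloor s/2\rfloor,\ell}(x)=Y^{n-2\lfloor s/2\rfloor}_\ell(x)=P^{-1,n-s+1}_{0,\ell}(x)$.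
   Context: $\mathbb S^{d-1}$ is the unit sphere, $\langle f,g\rangle_{\mathbb S^{d-1}}=\frac1{\omega_d}\int fg\,d\sigma$. $(a)_0=1$, $(a)_m=a(a+1)\cdots(a+m-1)$. $\mathcal H^d_m$: homogeneous harmonic polynomials of degree $m$ in $d$ variables, $a^d_m=\dim\mathcal H^d_m$, $\{Y^m_\ell\}_{\ell=1}^{a^d_m}$ a basis orthonormal for $\langle\cdot,\cdot\rangle_{\mathbb S^{d-1}}$. Generalized Jacobi polynomials: for $\alpha,\beta\in\mathbb R$, $j\in\mathbb N_0$, let $j_0=-j-\alpha-\beta$ if this number lies in $\{1,\dots,j\}$ and $j_0=0$ otherwise; $\widehat P^{(\alpha,\beta)}_j(t)=\sum_{k=j_0}^j\frac{(k+\alpha+1)_{j-k}}{(j-k)!\,k!\,(j+\alpha+\beta+k+1)_{j-k}}\big(\frac{t-1}2\big)^k$. For $\mu\in\mathbb R$, $0\le j\le n/2$, $1\le\ell\le a^d_{n-2j}$: $P^{\mu,n}_{j,\ell}(x)=(n-j+\tfrac d2)_j\,\widehat P^{(\mu,n-2j+\frac d2-1)}_j(2\|x\|^2-1)\,Y^{n-2j}_\ell(x)$, and $P^{\mu,n}_{j,\ell}:=0$ if $j<0$ or $j>n/2$. For $m,j\in\mathbb N_0$ let $(c_i^{m,j})_{0\le i\le j}$ be the unique solution of $4^k\sum_{i=k}^j(-i)_k(-k)_{i-k}\frac{(m+d/2)_k}{(m+d/2)_{i-k}}c_i=\delta_{k,j}$, $0\le k\le j$, and $Y^{m,j}_\ell(x)=\sum_{i=0}^jc^{m,j}_i(1-\|x\|^2)^iY^m_\ell(x)$.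 Define $Q^{-s,n}_{j,\ell}$: if $j\ge s$, $Q^{-s,n}_{j,\ell}=P^{-s,n}_{j,\ell}$; if $\lceil s/2\rceil\le j\le s-1$, $Q^{-s,n}_{j,\ell}=P^{-s,n}_{j,\ell}-\sum_{k=0}^{\lceil s/2\rceil-1}\gamma_kY^{n-2j,k}_\ell$, where $\gamma_k$ is the constant with $\Delta^kP^{-s,n}_{j,\ell}(\xi)=\gamma_kY^{n-2j}_\ell(\xi)$ for all $\xi\in\mathbb S^{d-1}$ (note $\Delta^kP^{-s,n}_{j,\ell}(x)=q(\|x\|^2)Y^{n-2j}_\ell(x)$ for a univariate polynomial $q$, and $\gamma_k=q(1)$); if $0\le j\le\lceil s/2\rceil-1$, $Q^{-s,n}_{j,\ell}=Y^{n-2j,j}_\ell$. *)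

theory Defs
  imports "HOL-Analysis.Analysis"
begin

text \<open>Ambient space R^d is modelled by a Euclidean space 'a with d = DIM('a).\<close>

definition monomial :: "('a::euclidean_space \<Rightarrow> nat) \<Rightarrow> 'a \<Rightarrow> real" where
  "monomial \<alpha> x = (\<Prod>b\<in>Basis. (x \<bullet> b) ^ \<alpha> b)"

definition homog_poly :: "nat \<Rightarrow> ('a::euclidean_space \<Rightarrow> real) \<Rightarrow> bool" where
  "homog_poly m f \<longleftrightarrow> (\<exists>A c. finite A \<and> (\<forall>\<alpha>\<in>A. (\<Sum>b\<in>Basis. \<alpha> b) = m) \<and>
      f = (\<lambda>x. \<Sum>\<alpha>\<in>A. c \<alpha> * monomial \<alpha> x))"

definition laplacian :: "('a::euclidean_space \<Rightarrow> real) \<Rightarrow> 'a \<Rightarrow> real" where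
  "laplacian f x = (\<Sum>b\<in>Basis. deriv (deriv (\<lambda>t. f (x + t *\<^sub>R b))) 0)"

definition harmonic_space :: "nat \<Rightarrow> ('a::euclidean_space \<Rightarrow> real) set" where
  "harmonic_space m = {f. homog_poly m f \<and> laplacian f = (\<lambda>_. 0)}"

text \<open>Normalised sphere inner product (1/omega_d) int_S f g d sigma, via the cone measure:
  int_S h d sigma / omega_d = (1/vol B) int_B h(x/|x|) dx.\<close>
definition sph_inner :: "('a::euclidean_space \<Rightarrow> real) \<Rightarrow> ('a \<Rightarrow> real) \<Rightarrow> real" where
  "sph_inner f g = integral (ball 0 1) (\<lambda>x. f (x /\<^sub>R norm x) * g (x /\<^sub>R norm x))
      / measure lebesgue (ball (0::'a) 1)"

text \<open>For each m, Y m 1, ..., Y m (N m) is an orthonormal basis of H_m (so N m = a^d_m).\<close>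
definition orthonormal_harmonic_basis ::
    "(nat \<Rightarrow> nat) \<Rightarrow> (nat \<Rightarrow> nat \<Rightarrow> 'a::euclidean_space \<Rightarrow> real) \<Rightarrow> bool" where
  "orthonormal_harmonic_basis N Y \<longleftrightarrow> (\<forall>m.
     (\<forall>l\<in>{1..N m}. Y m l \<in> harmonic_space m) \<and>
     (\<forall>l\<in>{1..N m}. \<forall>l'\<in>{1..N m}. sph_inner (Y m l) (Y m l') = (if l = l' then 1 else 0)) \<and>
     (\<forall>f\<in>harmonic_space m. \<exists>c. f = (\<lambda>x. \<Sum>l=1..N m. c l * Y m l x)))"

definition jac_hat :: "real \<Rightarrow> real \<Rightarrow> nat \<Rightarrow> real \<Rightarrow> real" where
  "jac_hat \<alpha> \<beta> j t =
    (let v = - real j - \<alpha> - \<beta>;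
         j0 = (if \<exists>i\<in>{1..j}. v = real i then nat \<lfloor>v\<rfloor> else 0)
     in \<Sum>k=j0..j. pochhammer (real k + \<alpha> + 1) (j - k)
          / (fact (j - k) * fact k * pochhammer (real j + \<alpha> + \<beta> + real k + 1) (j - k))
          * ((t - 1) / 2) ^ k)"

definition genP :: "(nat \<Rightarrow> nat \<Rightarrow> 'a::euclidean_space \<Rightarrow> real) \<Rightarrow> real \<Rightarrow> int \<Rightarrow> int \<Rightarrow> nat \<Rightarrow> 'a \<Rightarrow> real" where
  "genP Y \<mu> n j l x =
    (if 0 \<le> j \<and> 2 * j \<le> n then
       pochhammer (real_of_int (n - j) + real DIM('a) / 2) (nat j)
       * jac_hat \<mu> (real_of_int (n - 2 * j) + real DIM('a) / 2 - 1) (nat j) (2 * norm x ^ 2 - 1)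
       * Y (nat (n - 2 * j)) l x
     else 0)"

definition ccoef :: "real \<Rightarrow> nat \<Rightarrow> nat \<Rightarrow> nat \<Rightarrow> real" where
  "ccoef d m j = (THE c. (\<forall>k\<le>j. 4 ^ k * (\<Sum>i=k..j. pochhammer (- real i) k * pochhammer (- real k) (i - k)
          * pochhammer (real m + d / 2) k / pochhammer (real m + d / 2) (i - k) * c i)
        = (if k = j then 1 else 0)) \<and> (\<forall>i>j. c i = 0))"

definition Yj :: "(nat \<Rightarrow> nat \<Rightarrow> 'a::euclidean_space \<Rightarrow> real) \<Rightarrow> nat \<Rightarrow> nat \<Rightarrow> nat \<Rightarrow> 'a \<Rightarrow> real" where
  "Yj Y m j l x = (\<Sum>i=0..j. ccoef (real DIM('a)) m j i * (1 - norm x ^ 2) ^ i * Y m l x)"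

definition gamma :: "(nat \<Rightarrow> nat \<Rightarrow> 'a::euclidean_space \<Rightarrow> real) \<Rightarrow> nat \<Rightarrow> nat \<Rightarrow> nat \<Rightarrow> nat \<Rightarrow> nat \<Rightarrow> real" where
  "gamma Y s n j l k = (THE \<gamma>. \<forall>\<xi>\<in>sphere 0 1.
      (laplacian ^^ k) (genP Y (- real s) (int n) (int j) l) \<xi> = \<gamma> * Y (n - 2 * j) l \<xi>)"

definition Q :: "(nat \<Rightarrow> nat \<Rightarrow> 'a::euclidean_space \<Rightarrow> real) \<Rightarrow> nat \<Rightarrow> nat \<Rightarrow> nat \<Rightarrow> nat \<Rightarrow> 'a \<Rightarrow> real" where
  "Q Y s n j l =
    (if s \<le> j then genP Y (- real s) (int n) (int j) l
     else if nat \<lceil>real s / 2\<rceil> \<le> j then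
       (\<lambda>x. genP Y (- real s) (int n) (int j) l x
            - (\<Sum>k<nat \<lceil>real s / 2\<rceil>. gamma Y s n j l k * Yj Y (n - 2 * j) k l x))
     else Yj Y (n - 2 * j) j l)"

end

theory Submission
  imports Defs "HOL-Computational_Algebra.Polynomial"
begin

text \<open>For harmonic \<open>Y \<in> H_m\<close> the Laplacian acts on \<open>q(|x|^2) Y(x)\<close> through the operator
  \<open>L_B q = 4 t q'' + 4 B q'\<close> with \<open>B = m + d/2\<close> (Euler's identity for \<open>Y\<close>), so
  \<open>P^{\<mu>,n}_{j,l}\<close>, \<open>Y^{m,j}_l\<close> and \<open>Q^{-s,n}_{j,l}\<close> all reduce to univariate polynomials in
  \<open>t = |x|^2\<close>, and the sphere to \<open>t = 1\<close>. \<open>L_B^k\<close> maps the Jacobi polynomial of \<open>P^{\<mu>,n}_j\<close>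
  to a multiple of that of \<open>P^{\<mu>+2k,n-2k}_{j-k}\<close>, whose value at \<open>t = 1\<close> carries the factor
  \<open>(\<mu> + 2k + 1)_{j-k}\<close>; for \<open>\<mu> = -s\<close> and \<open>2k < s \<le> j + k\<close> it vanishes. The triangular system
  defining \<open>c^{m,j}\<close> says exactly that \<open>(L_B^r Y^{m,j})(1) = \<delta>_{rj}\<close>, so subtracting the
  \<open>\<gamma>_k Y^{m,k}\<close> clears the values at \<open>t = 1\<close> for \<open>k < \<lceil>s/2\<rceil>\<close>, while \<open>L_B^{\<lfloor>s/2\<rfloor>}\<close>
  kills everything subtracted (in the odd case because \<open>\<gamma>_{\<lfloor>s/2\<rfloor>} = 0\<close>) and leaves the
  lowered \<open>P\<close>.\<close>

subsection \<open>The radial part of the Laplacian\<close>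

definition radial_lap :: "real \<Rightarrow> real poly \<Rightarrow> real poly" where
  "radial_lap B p = smult 4 (pCons 0 (pderiv (pderiv p))) + smult (4 * B) (pderiv p)"

lemma coeff_radial_lap:
  "coeff (radial_lap B p) b = 4 * (real b + 1) * (real b + B) * coeff p (Suc b)"
proof (cases b)
  case 0
  then show ?thesis by (simp add: radial_lap_def coeff_pderiv)
next
  case (Suc b')
  then show ?thesis by (simp add: radial_lap_def coeff_pderiv algebra_simps)
qed

lemma coeff_radial_lap_pow:
  "coeff ((radial_lap B ^^ k) p) b
     = 4 ^ k * pochhammer (real b + 1) k * pochhammer (real b + B) k * coeff p (b + k)"
proof (induction k arbitrary: b)
  case 0
  then show ?case by simp
next
  case (Suc k)
  have "coeff ((radial_lap B ^^ Suc k) p) b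
      = 4 * (real b + 1) * (real b + B) * coeff ((radial_lap B ^^ k) p) (Suc b)"
    by (simp add: coeff_radial_lap)
  also have "\<dots> = 4 * (real b + 1) * (real b + B) * (4 ^ k * pochhammer (real b + 2) k
      * pochhammer (real b + 1 + B) k * coeff p (b + Suc k))"
    by (simp add: Suc add.commute add.left_commute)
  finally show ?case by (simp add: pochhammer_rec algebra_simps)
qed

lemma radial_lap_pow_diff:
  "(radial_lap B ^^ k) (p - q) = (radial_lap B ^^ k) p - (radial_lap B ^^ k) q"
  by (rule poly_eqI) (simp add: coeff_radial_lap_pow algebra_simps)

lemma radial_lap_pow_smult:
  "(radial_lap B ^^ k) (smult c p) = smult c ((radial_lap B ^^ k) p)"
  by (rule poly_eqI) (simp add: coeff_radial_lap_pow algebra_simps)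

lemma radial_lap_pow_sum:
  "(radial_lap B ^^ k) (\<Sum>i\<in>A. f i) = (\<Sum>i\<in>A. (radial_lap B ^^ k) (f i))"
  by (rule poly_eqI) (simp add: coeff_radial_lap_pow coeff_sum sum_distrib_left)

definition radial_mult :: "real poly \<Rightarrow> ('a::euclidean_space \<Rightarrow> real) \<Rightarrow> 'a \<Rightarrow> real" where
  "radial_mult q f x = poly q (norm x ^ 2) * f x"

lemma radial_mult_sphere: "\<xi> \<in> sphere 0 1 \<Longrightarrow> radial_mult q f \<xi> = poly q 1 * f \<xi>"
  by (simp add: radial_mult_def)

definition monomial_line :: "('a::euclidean_space \<Rightarrow> nat) \<Rightarrow> 'a \<Rightarrow> 'a \<Rightarrow> real poly" where
  "monomial_line \<alpha> x b = smult (\<Prod>b'\<in>Basis - {b}. (x \<bullet> b') ^ \<alpha> b') ([:x \<bullet> b, 1:] ^ \<alpha> b)"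

lemma monomial_split:
  assumes "b \<in> Basis"
  shows "monomial \<alpha> x = (x \<bullet> b) ^ \<alpha> b * (\<Prod>b'\<in>Basis - {b}. (x \<bullet> b') ^ \<alpha> b')"
  unfolding monomial_def using assms by (simp add: prod.remove)

lemma poly_monomial_line:
  assumes b: "b \<in> Basis"
  shows "poly (monomial_line \<alpha> x b) t = monomial \<alpha> (x + t *\<^sub>R b)"
proof -
  have "(\<Prod>b'\<in>Basis - {b}. ((x + t *\<^sub>R b) \<bullet> b') ^ \<alpha> b') = (\<Prod>b'\<in>Basis - {b}. (x \<bullet> b') ^ \<alpha> b')"
    by (rule prod.cong) (use b in \<open>auto simp: inner_add_left inner_not_same_Basis\<close>)
  moreover have "(x + t *\<^sub>R b) \<bullet> b = x \<bullet> b + t"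
    using b by (simp add: inner_add_left)
  ultimately show ?thesis
    using monomial_split[OF b, of \<alpha> "x + t *\<^sub>R b"] by (simp add: monomial_line_def mult.commute)
qed

lemma monomial_line_euler:
  assumes b: "b \<in> Basis"
  shows "(x \<bullet> b) * poly (pderiv (monomial_line \<alpha> x b)) 0 = real (\<alpha> b) * monomial \<alpha> x"
proof (cases "\<alpha> b")
  case 0
  then show ?thesis by (simp add: monomial_line_def pderiv_smult)
next
  case (Suc n)
  have "poly (pderiv (monomial_line \<alpha> x b)) 0
      = (\<Prod>b'\<in>Basis - {b}. (x \<bullet> b') ^ \<alpha> b') * (real (Suc n) * (x \<bullet> b) ^ n)"
    by (simp add: monomial_line_def pderiv_smult pderiv_power Suc pderiv_pCons del: power_Suc)
  then show ?thesis
    using monomial_split[OF b, of \<alpha> x] Suc by (simp add: algebra_simps)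
qed

lemma homog_poly_lines:
  assumes "homog_poly m f"
  obtains H where "\<And>b. b \<in> Basis \<Longrightarrow> (\<lambda>t. f (x + t *\<^sub>R b)) = poly (H b)"
    and "(\<Sum>b\<in>Basis. (x \<bullet> b) * poly (pderiv (H b)) 0) = real m * f x"
proof -
  from assms obtain A c where A: "\<forall>\<alpha>\<in>A. (\<Sum>b\<in>Basis. \<alpha> b) = m"
    and f: "f = (\<lambda>x. \<Sum>\<alpha>\<in>A. c \<alpha> * monomial \<alpha> x)"
    unfolding homog_poly_def by auto
  define H where "H b = (\<Sum>\<alpha>\<in>A. smult (c \<alpha>) (monomial_line \<alpha> x b))" for b
  have lines: "(\<lambda>t. f (x + t *\<^sub>R b)) = poly (H b)" if "b \<in> Basis" for b
    using that by (auto simp: f H_def poly_sum poly_monomial_line)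
  have "(\<Sum>b\<in>Basis. (x \<bullet> b) * poly (pderiv (H b)) 0)
      = (\<Sum>b\<in>Basis. \<Sum>\<alpha>\<in>A. c \<alpha> * ((x \<bullet> b) * poly (pderiv (monomial_line \<alpha> x b)) 0))"
    by (simp add: H_def higher_pderiv_sum[of 1, simplified] pderiv_smult poly_sum sum_distrib_left algebra_simps)
  also have "\<dots> = (\<Sum>b\<in>Basis. \<Sum>\<alpha>\<in>A. c \<alpha> * (real (\<alpha> b) * monomial \<alpha> x))"
    by (intro sum.cong refl) (simp add: monomial_line_euler)
  also have "\<dots> = (\<Sum>\<alpha>\<in>A. c \<alpha> * (real (\<Sum>b\<in>Basis. \<alpha> b) * monomial \<alpha> x))"
    by (subst sum.swap) (simp add: sum_distrib_left sum_distrib_right algebra_simps)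
  also have "\<dots> = real m * f x"
    using A by (simp add: f sum_distrib_left algebra_simps)
  finally show ?thesis using lines by (rule that[rotated])
qed

lemma deriv_poly: "deriv (poly p) = poly (pderiv (p :: real poly))"
  by (rule ext, rule DERIV_imp_deriv) simp

lemma laplacian_eq_line_sum:
  assumes "\<And>b. b \<in> Basis \<Longrightarrow> (\<lambda>t. f (x + t *\<^sub>R b)) = poly (H b)"
  shows "laplacian f x = (\<Sum>b\<in>Basis. poly (pderiv (pderiv (H b))) 0)"
  unfolding laplacian_def by (intro sum.cong refl) (simp add: assms deriv_poly)

lemma norm_line_square:
  assumes b: "b \<in> Basis"
  shows "norm (x + t *\<^sub>R b) ^ 2 = poly [:x \<bullet> x, 2 * (x \<bullet> b), 1:] t"
proof -
  have "norm (x + t *\<^sub>R b) ^ 2 = x \<bullet> x + 2 * t * (x \<bullet> b) + t * t * (b \<bullet> b)"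
    by (simp add: power2_norm_eq_inner inner_add_left inner_add_right inner_commute[of b x]
        algebra_simps)
  then show ?thesis using b by (simp add: algebra_simps)
qed

lemma pderiv2_pcompose_quadratic_mult_0:
  fixes q H :: "real poly"
  shows "poly (pderiv (pderiv (pcompose q [:r, 2 * a, 1:] * H))) 0
    = poly q r * poly (pderiv (pderiv H)) 0 + 4 * a * poly (pderiv q) r * poly (pderiv H) 0
      + poly H 0 * (4 * poly (pderiv (pderiv q)) r * a ^ 2 + 2 * poly (pderiv q) r)"
  by (simp add: pderiv_mult pderiv_pcompose poly_pcompose pderiv_pCons pderiv_add pderiv_smult
      algebra_simps power2_eq_square)

lemma laplacian_radial_mult:
  fixes f :: "'a::euclidean_space \<Rightarrow> real"
  assumes "f \<in> harmonic_space m"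
  shows "laplacian (radial_mult q f) = radial_mult (radial_lap (real m + real DIM('a) / 2) q) f"
proof
  fix x :: 'a
  let ?r = "norm x ^ 2"
  have homog: "homog_poly m f" and harmonic: "laplacian f x = 0"
    using assms unfolding harmonic_space_def by auto
  obtain H where H: "\<And>b. b \<in> Basis \<Longrightarrow> (\<lambda>t. f (x + t *\<^sub>R b)) = poly (H b)"
    and euler: "(\<Sum>b\<in>Basis. (x \<bullet> b) * poly (pderiv (H b)) 0) = real m * f x"
    using homog_poly_lines[OF homog] by blast
  have H0: "poly (H b) 0 = f x" if "b \<in> Basis" for b
    using fun_cong[OF H[OF that], of 0] by simp
  have harmonic_lines: "(\<Sum>b\<in>Basis. poly (pderiv (pderiv (H b))) 0) = 0"
    using harmonic laplacian_eq_line_sum[OF H] by simp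
  have norm_sum: "(\<Sum>b\<in>Basis. (x \<bullet> b) ^ 2) = ?r"
    unfolding power2_norm_eq_inner euclidean_inner[of x x] by (simp add: power2_eq_square)
  have lines: "(\<lambda>t. radial_mult q f (x + t *\<^sub>R b)) = poly (pcompose q [:?r, 2 * (x \<bullet> b), 1:] * H b)"
    if "b \<in> Basis" for b
  proof
    fix t
    show "radial_mult q f (x + t *\<^sub>R b) = poly (pcompose q [:?r, 2 * (x \<bullet> b), 1:] * H b) t"
      using fun_cong[OF H[OF that], of t] norm_line_square[OF that, of x t]
      by (simp add: radial_mult_def poly_pcompose power2_norm_eq_inner)
  qed
  have "laplacian (radial_mult q f) x
      = (\<Sum>b\<in>Basis. poly (pderiv (pderiv (pcompose q [:?r, 2 * (x \<bullet> b), 1:] * H b))) 0)"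
    by (rule laplacian_eq_line_sum[OF lines])
  also have "\<dots> = (\<Sum>b\<in>Basis. poly q ?r * poly (pderiv (pderiv (H b))) 0
       + 4 * poly (pderiv q) ?r * ((x \<bullet> b) * poly (pderiv (H b)) 0)
       + f x * (4 * poly (pderiv (pderiv q)) ?r * (x \<bullet> b) ^ 2 + 2 * poly (pderiv q) ?r))"
    by (intro sum.cong refl, simp only: pderiv2_pcompose_quadratic_mult_0) (simp add: H0 algebra_simps)
  also have "\<dots> = poly q ?r * (\<Sum>b\<in>Basis. poly (pderiv (pderiv (H b))) 0)
       + 4 * poly (pderiv q) ?r * (\<Sum>b\<in>Basis. (x \<bullet> b) * poly (pderiv (H b)) 0)
       + f x * (4 * poly (pderiv (pderiv q)) ?r * (\<Sum>b\<in>Basis. (x \<bullet> b) ^ 2)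
                + 2 * poly (pderiv q) ?r * real DIM('a))"
    by (simp add: sum.distrib sum_distrib_left sum_distrib_right algebra_simps)
  also have "\<dots> = radial_mult (radial_lap (real m + real DIM('a) / 2) q) f x"
    unfolding harmonic_lines euler norm_sum by (simp add: radial_mult_def radial_lap_def algebra_simps)
  finally show "laplacian (radial_mult q f) x = radial_mult (radial_lap (real m + real DIM('a) / 2) q) f x" .
qed

lemma laplacian_pow_radial_mult:
  fixes f :: "'a::euclidean_space \<Rightarrow> real"
  assumes "f \<in> harmonic_space m"
  shows "(laplacian ^^ k) (radial_mult q f) = radial_mult ((radial_lap (real m + real DIM('a) / 2) ^^ k) q) f"
  by (induction k) (simp_all add: laplacian_radial_mult[OF assms])


subsection \<open>Generalized Jacobi polynomials\<close>

definition jacobi_start :: "real \<Rightarrow> real \<Rightarrow> nat \<Rightarrow> nat" where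
  "jacobi_start \<alpha> \<beta> j =
    (let v = - real j - \<alpha> - \<beta> in if \<exists>i\<in>{1..j}. v = real i then nat \<lfloor>v\<rfloor> else 0)"

definition jacobi_shifted_coeff :: "real \<Rightarrow> real \<Rightarrow> nat \<Rightarrow> nat \<Rightarrow> real" where
  "jacobi_shifted_coeff \<alpha> \<beta> j k = pochhammer (real k + \<alpha> + 1) (j - k)
     / (fact (j - k) * fact k * pochhammer (real j + \<alpha> + \<beta> + real k + 1) (j - k))"

definition jacobi_poly :: "real \<Rightarrow> real \<Rightarrow> nat \<Rightarrow> real poly" where
  "jacobi_poly \<alpha> \<beta> j =
    (\<Sum>k = jacobi_start \<alpha> \<beta> j..j. smult (jacobi_shifted_coeff \<alpha> \<beta> j k) ([:-1, 1:] ^ k))"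

lemma jac_hat_eq_poly_jacobi_poly: "jac_hat \<alpha> \<beta> j (2 * r - 1) = poly (jacobi_poly \<alpha> \<beta> j) r"
proof -
  have half: "(2 * r - 1 - 1) / 2 = r - 1" by (simp add: field_simps)
  show ?thesis
    unfolding jac_hat_def half
    by (simp add: poly_sum jacobi_poly_def jacobi_start_def jacobi_shifted_coeff_def Let_def)
qed

lemma jacobi_poly_0 [simp]: "jacobi_poly \<alpha> \<beta> 0 = 1"
  by (simp add: jacobi_poly_def jacobi_start_def jacobi_shifted_coeff_def)

lemma jacobi_start_le: "- real j - \<alpha> - \<beta> \<le> real t \<Longrightarrow> jacobi_start \<alpha> \<beta> j \<le> t"
  unfolding jacobi_start_def Let_def by auto

lemma jacobi_start_eq:
  assumes "i \<in> {1..j}" "- real j - \<alpha> - \<beta> = real i"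
  shows "jacobi_start \<alpha> \<beta> j = i"
  using assms unfolding jacobi_start_def Let_def by auto

lemma poly_jacobi_poly_1:
  assumes "jacobi_start \<alpha> \<beta> j = 0"
  shows "poly (jacobi_poly \<alpha> \<beta> j) 1 = jacobi_shifted_coeff \<alpha> \<beta> j 0"
proof -
  have "poly (jacobi_poly \<alpha> \<beta> j) 1 = (\<Sum>k = 0..j. jacobi_shifted_coeff \<alpha> \<beta> j k * (0::real) ^ k)"
    unfolding jacobi_poly_def assms by (simp add: poly_sum)
  also have "\<dots> = jacobi_shifted_coeff \<alpha> \<beta> j 0"
    by (simp add: sum.atLeast_Suc_atMost[of 0 j, simplified] power_0_left)
  finally show ?thesis .
qed

lemma poly_jacobi_poly_1_eq_0:
  assumes "0 \<le> \<beta>" "- \<alpha> \<le> real j" "pochhammer (\<alpha> + 1) j = 0"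
  shows "poly (jacobi_poly \<alpha> \<beta> j) 1 = 0"
proof -
  have "jacobi_start \<alpha> \<beta> j = 0"
    using jacobi_start_le[of j \<alpha> \<beta> 0] assms(1,2) by simp
  then show ?thesis
    using assms(3) by (simp add: poly_jacobi_poly_1 jacobi_shifted_coeff_def)
qed

definition jacobi_poly_coeff :: "real \<Rightarrow> real \<Rightarrow> nat \<Rightarrow> nat \<Rightarrow> real" where
  "jacobi_poly_coeff \<alpha> \<beta> j a =
    (if a \<le> j then (-1) ^ (j - a) * pochhammer (\<beta> + real a + 1) (j - a)
       / (fact a * fact (j - a) * pochhammer (real j + \<alpha> + \<beta> + 1 + real a) (j - a))
     else 0)"

lemma coeff_linear_power: "coeff ([:c, 1:] ^ k) a = of_nat (k choose a) * (c::real) ^ (k - a)"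
proof (cases "a \<le> k")
  case True
  then show ?thesis using coeff_linear_poly_power[of a k c 1] by simp
next
  case False
  have "degree ([:c, 1:] ^ k) \<le> k"
    by (metis degree_linear_power order_refl)
  then show ?thesis using False by (simp add: coeff_eq_0)
qed

lemma pochhammer_reflect:
  assumes "i \<le> N"
  shows "pochhammer ((p::real) + real i) (N - i) = (-1) ^ (N - i) * pochhammer (- p - real N + 1) (N - i)"
proof -
  have shift: "p + real N - 1 - real (N - i) + 1 = p + real i"
    using assms by (simp add: of_nat_diff)
  have reflected: "pochhammer (- (p + real N - 1)) (N - i) = (-1) ^ (N - i) * pochhammer (p + real i) (N - i)"
    using pochhammer_minus[of "p + real N - 1" "N - i", unfolded shift] .
  have "- p - real N + 1 = - (p + real N - 1)" by linarith
  then have "pochhammer (- p - real N + 1) (N - i) = (-1) ^ (N - i) * pochhammer (p + real i) (N - i)"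
    by (simp only: reflected)
  moreover have "((-1::real) ^ (N - i)) * (-1) ^ (N - i) = 1"
    by (simp add: power_mult_distrib[symmetric])
  ultimately show ?thesis by (simp add: mult.assoc[symmetric])
qed

lemma alternating_pochhammer_vandermonde:
  "(\<Sum>i\<le>N. (-1) ^ i * real (N choose i) * pochhammer ((p::real) + real i) (N - i) * pochhammer (p + q) i)
     = pochhammer (- q) N"
proof -
  have "(\<Sum>i\<le>N. (-1) ^ i * real (N choose i) * pochhammer (p + real i) (N - i) * pochhammer (p + q) i)
      = (\<Sum>i\<le>N. (-1) ^ N * (real (N choose i) * pochhammer (p + q) i * pochhammer (- p - real N + 1) (N - i)))"
  proof (rule sum.cong[OF refl])
    fix i assume "i \<in> {..N}"
    then have iN: "i \<le> N" by simp
    have "(-1::real) ^ i * (-1) ^ (N - i) = (-1) ^ N"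
      by (metis iN le_add_diff_inverse power_add)
    then show "(-1) ^ i * real (N choose i) * pochhammer (p + real i) (N - i) * pochhammer (p + q) i
      = (-1) ^ N * (real (N choose i) * pochhammer (p + q) i * pochhammer (- p - real N + 1) (N - i))"
      using pochhammer_reflect[OF iN, of p] by (simp add: algebra_simps)
  qed
  also have "\<dots> = (-1) ^ N * pochhammer ((p + q) + (- p - real N + 1)) N"
    by (subst pochhammer_binomial_sum) (simp add: sum_distrib_left)
  also have "(p + q) + (- p - real N + 1) = q - real N + 1" by simp
  also have "(-1) ^ N * pochhammer (q - real N + 1) N = pochhammer (- q) N"
    by (simp add: pochhammer_minus)
  finally show ?thesis .
qed

lemma pochhammer_jacobi_denominator_nonzero:
  assumes "jacobi_start \<alpha> \<beta> j \<le> a" "a \<le> j"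
  shows "pochhammer (real j + \<alpha> + \<beta> + 1 + real a) (j - a) \<noteq> 0"
proof
  assume "pochhammer (real j + \<alpha> + \<beta> + 1 + real a) (j - a) = 0"
  then obtain k where k: "k < j - a" "real j + \<alpha> + \<beta> + 1 + real a = - real k"
    by (auto simp: pochhammer_eq_0_iff)
  have "- real j - \<alpha> - \<beta> = real (a + 1 + k)" using k(2) by simp
  then have "jacobi_start \<alpha> \<beta> j = a + 1 + k"
    by (rule jacobi_start_eq[rotated]) (use k(1) in simp)
  with assms(1) show False by simp
qed

lemma coeff_jacobi_poly_reindexed:
  assumes a: "jacobi_start \<alpha> \<beta> j \<le> a" "a \<le> j"
  shows "coeff (jacobi_poly \<alpha> \<beta> j) a
    = (\<Sum>i = 0..j - a. jacobi_shifted_coeff \<alpha> \<beta> j (i + a) * (real ((i + a) choose a) * (-1) ^ i))"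
proof -
  let ?f = "\<lambda>k. jacobi_shifted_coeff \<alpha> \<beta> j k * (real (k choose a) * (-1) ^ (k - a))"
  have "coeff (jacobi_poly \<alpha> \<beta> j) a = (\<Sum>k = jacobi_start \<alpha> \<beta> j..j. ?f k)"
    unfolding jacobi_poly_def by (simp add: coeff_sum coeff_linear_power)
  also have "\<dots> = (\<Sum>k = a..j. ?f k)"
  proof -
    have "{jacobi_start \<alpha> \<beta> j..j} = {jacobi_start \<alpha> \<beta> j..<a} \<union> {a..j}" using a by auto
    moreover have "(\<Sum>k \<in> {jacobi_start \<alpha> \<beta> j..<a}. ?f k) = 0"
      by (intro sum.neutral) auto
    ultimately show ?thesis by (simp add: sum.union_disjoint ivl_disj_int)
  qed
  also have "\<dots> = (\<Sum>i = 0..j - a. ?f (i + a))"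
    using sum.shift_bounds_cl_nat_ivl[of ?f 0 a "j - a"] a(2) by simp
  finally show ?thesis by simp
qed

text \<open>Re-expanding the powers of \<open>r - 1\<close> in powers of \<open>r\<close> gives a Chu--Vandermonde sum.\<close>

lemma coeff_jacobi_poly:
  assumes a: "jacobi_start \<alpha> \<beta> j \<le> a"
  shows "coeff (jacobi_poly \<alpha> \<beta> j) a = jacobi_poly_coeff \<alpha> \<beta> j a"
proof (cases "a \<le> j")
  case False
  then show ?thesis
    unfolding jacobi_poly_def jacobi_poly_coeff_def
    by (auto simp: coeff_sum coeff_linear_power intro!: sum.neutral)
next
  case True
  define N where "N = j - a"
  define c where "c = real j + \<alpha> + \<beta> + 1 + real a"
  define p where "p = real a + \<alpha> + 1"
  define q where "q = real j + \<beta>"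
  have jN: "j = a + N" using True N_def by simp
  have cpq: "c = p + q" unfolding c_def p_def q_def by simp
  have cN: "pochhammer c N \<noteq> 0"
    unfolding c_def N_def by (rule pochhammer_jacobi_denominator_nonzero[OF a True])
  have "coeff (jacobi_poly \<alpha> \<beta> j) a
      = (\<Sum>i\<le>N. ((-1) ^ i * real (N choose i) * pochhammer (p + real i) (N - i)
           * pochhammer (p + q) i) / (fact a * fact N * pochhammer c N))"
    unfolding coeff_jacobi_poly_reindexed[OF a True] N_def[symmetric] atLeast0AtMost
  proof (rule sum.cong[OF refl])
    fix i assume "i \<in> {..N}"
    then have iN: "i \<le> N" by simp
    have e1: "real (i + a) + \<alpha> + 1 = p + real i" unfolding p_def by simp
    have e2: "real j + \<alpha> + \<beta> + real (i + a) + 1 = c + real i" unfolding c_def by simp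
    have e3: "j - (i + a) = N - i" using jN by simp
    have pp: "pochhammer c N = pochhammer c i * pochhammer (c + real i) (N - i)"
      using pochhammer_product'[of c i "N - i"] iN by simp
    have ch: "real ((i + a) choose a) = fact (i + a) / (fact a * fact i)"
      by (simp add: binomial_fact)
    have chN: "real (N choose i) = fact N / (fact i * fact (N - i))"
      using iN by (simp add: binomial_fact)
    have "pochhammer c i \<noteq> 0" "pochhammer (c + real i) (N - i) \<noteq> 0"
      using cN pp by auto
    then show "jacobi_shifted_coeff \<alpha> \<beta> j (i + a) * (real ((i + a) choose a) * (-1) ^ i)
        = ((-1) ^ i * real (N choose i) * pochhammer (p + real i) (N - i) * pochhammer (p + q) i)
            / (fact a * fact N * pochhammer c N)"
      unfolding jacobi_shifted_coeff_def e1 e2 e3 ch chN pp cpq[symmetric] by (simp add: field_simps)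
  qed
  also have "\<dots> = pochhammer (- q) N / (fact a * fact N * pochhammer c N)"
    by (simp add: sum_divide_distrib[symmetric] alternating_pochhammer_vandermonde)
  also have "pochhammer (- q) N = (-1) ^ N * pochhammer (\<beta> + real a + 1) N"
  proof -
    have "q - real N + 1 = \<beta> + real a + 1" unfolding q_def using jN by simp
    then show ?thesis by (simp add: pochhammer_minus)
  qed
  finally show ?thesis unfolding jacobi_poly_coeff_def using True N_def c_def by simp
qed

lemma pochhammer_of_nat_plus_1: "pochhammer (real b + 1) r = fact (b + r) / fact b"
proof (induction r)
  case 0
  then show ?case by simp
next
  case (Suc r)
  then show ?case by (simp add: pochhammer_Suc algebra_simps)
qed

lemma radial_lap_pow_jacobi_poly:
  assumes \<beta>: "0 \<le> \<beta>" and kj: "k \<le> j" and \<alpha>: "- \<alpha> \<le> real (j + k)"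
  shows "(radial_lap (\<beta> + 1) ^^ k) (jacobi_poly \<alpha> \<beta> j)
       = smult (4 ^ k * pochhammer (\<beta> + 1 + real j - real k) k) (jacobi_poly (\<alpha> + 2 * real k) \<beta> (j - k))"
proof (rule poly_eqI)
  fix b
  let ?\<alpha>' = "\<alpha> + 2 * real k" and ?c = "4 ^ k * pochhammer (\<beta> + 1 + real j - real k) k"
  have start: "jacobi_start \<alpha> \<beta> j \<le> k"
    by (rule jacobi_start_le) (use \<alpha> \<beta> in simp)
  have start': "jacobi_start ?\<alpha>' \<beta> (j - k) = 0"
    using jacobi_start_le[of "j - k" ?\<alpha>' \<beta> 0] \<alpha> \<beta> kj by (simp add: of_nat_diff)
  have L: "coeff ((radial_lap (\<beta> + 1) ^^ k) (jacobi_poly \<alpha> \<beta> j)) b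
      = 4 ^ k * pochhammer (real b + 1) k * pochhammer (real b + \<beta> + 1) k * jacobi_poly_coeff \<alpha> \<beta> j (b + k)"
    using start by (simp add: coeff_radial_lap_pow coeff_jacobi_poly add.assoc)
  have R: "coeff (smult ?c (jacobi_poly ?\<alpha>' \<beta> (j - k))) b = ?c * jacobi_poly_coeff ?\<alpha>' \<beta> (j - k) b"
    using start' by (simp add: coeff_jacobi_poly)
  show "coeff ((radial_lap (\<beta> + 1) ^^ k) (jacobi_poly \<alpha> \<beta> j)) b = coeff (smult ?c (jacobi_poly ?\<alpha>' \<beta> (j - k))) b"
  proof (cases "b + k \<le> j")
    case False
    then show ?thesis unfolding L R jacobi_poly_coeff_def using kj by auto
  next
    case True
    define N where "N = j - k - b"
    have jN: "j = N + b + k" using True N_def by simp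
    have p1: "pochhammer (real b + \<beta> + 1) k * pochhammer (\<beta> + real (b + k) + 1) N
        = pochhammer (\<beta> + real b + 1) (k + N)"
      using pochhammer_product'[of "\<beta> + real b + 1" k N] by (simp add: add_ac)
    have p2: "pochhammer (\<beta> + real b + 1) N * pochhammer (\<beta> + 1 + real j - real k) k
        = pochhammer (\<beta> + real b + 1) (k + N)"
      using pochhammer_product'[of "\<beta> + real b + 1" N k] jN by (simp add: add_ac)
    have den: "real (j - k) + ?\<alpha>' + \<beta> + 1 + real b = real j + \<alpha> + \<beta> + 1 + real (b + k)"
      using kj by (simp add: of_nat_diff)
    have N: "j - (b + k) = N" "j - k - b = N" using jN by auto
    have "4 ^ k * pochhammer (real b + 1) k * pochhammer (real b + \<beta> + 1) k * jacobi_poly_coeff \<alpha> \<beta> j (b + k)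
        = 4 ^ k * (-1) ^ N * pochhammer (\<beta> + real b + 1) (k + N)
            / (fact b * fact N * pochhammer (real j + \<alpha> + \<beta> + 1 + real (b + k)) N)"
      unfolding jacobi_poly_coeff_def N p1[symmetric] pochhammer_of_nat_plus_1 using True
      by (simp add: field_simps)
    also have "\<dots> = ?c * jacobi_poly_coeff ?\<alpha>' \<beta> (j - k) b"
      unfolding jacobi_poly_coeff_def N den p2[symmetric] using True by (simp add: algebra_simps)
    finally show ?thesis unfolding L R .
  qed
qed

subsection \<open>The radial profiles of \<open>Y^{m,j}\<close>\<close>

lemma upper_triangular_solvable:
  fixes T :: "nat \<Rightarrow> nat \<Rightarrow> real"
  assumes diag: "\<And>k. k \<le> j \<Longrightarrow> T k k \<noteq> 0"
  shows "\<exists>c. (\<forall>k\<le>j. (\<Sum>i=k..j. T k i * c i) = e k) \<and> (\<forall>i>j. c i = 0)"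
proof -
  have "\<exists>c. (\<forall>k. t \<le> k \<and> k \<le> j \<longrightarrow> (\<Sum>i=k..j. T k i * c i) = e k) \<and> (\<forall>i>j. c i = 0)"
    if "t \<le> Suc j" for t
    using that
  proof (induction rule: inc_induct)
    case base
    show ?case by (intro exI[of _ "\<lambda>_. 0"]) auto
  next
    case (step t)
    then obtain c where rows: "\<forall>k. Suc t \<le> k \<and> k \<le> j \<longrightarrow> (\<Sum>i=k..j. T k i * c i) = e k"
      and c0: "\<forall>i>j. c i = 0"
      by auto
    have tj: "t \<le> j" using step.hyps by simp
    define c' where "c' = c(t := (e t - (\<Sum>i=Suc t..j. T t i * c i)) / T t t)"
    have tail: "(\<Sum>i=k..j. T k i * c' i) = (\<Sum>i=k..j. T k i * c i)" if "Suc t \<le> k" for k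
      by (rule sum.cong) (use that in \<open>auto simp: c'_def\<close>)
    have "(\<Sum>i=t..j. T t i * c' i) = T t t * c' t + (\<Sum>i=Suc t..j. T t i * c' i)"
      using tj by (simp add: sum.atLeast_Suc_atMost)
    then have row_t: "(\<Sum>i=t..j. T t i * c' i) = e t"
      using diag[OF tj] tail[of "Suc t"] by (simp add: c'_def)
    have "(\<Sum>i=k..j. T k i * c' i) = e k" if "t \<le> k" "k \<le> j" for k
      using that rows tail row_t by (cases "k = t") auto
    moreover have "\<forall>i>j. c' i = 0" using c0 tj by (auto simp: c'_def)
    ultimately show ?case by blast
  qed
  from this[of 0] show ?thesis by auto
qed

lemma upper_triangular_solution_unique:
  fixes T :: "nat \<Rightarrow> nat \<Rightarrow> real"
  assumes diag: "\<And>k. k \<le> j \<Longrightarrow> T k k \<noteq> 0"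
    and c1: "\<forall>k\<le>j. (\<Sum>i=k..j. T k i * c1 i) = e k" "\<forall>i>j. c1 i = 0"
    and c2: "\<forall>k\<le>j. (\<Sum>i=k..j. T k i * c2 i) = e k" "\<forall>i>j. c2 i = 0"
  shows "c1 = c2"
proof
  fix i
  show "c1 i = c2 i"
  proof (induction "j - i" arbitrary: i rule: less_induct)
    case less
    show ?case
    proof (cases "i \<le> j")
      case False
      then show ?thesis using c1 c2 by auto
    next
      case True
      have tail: "(\<Sum>i'=Suc i..j. T i i' * c1 i') = (\<Sum>i'=Suc i..j. T i i' * c2 i')"
        by (rule sum.cong[OF refl]) (use less True in auto)
      have "T i i * c1 i + (\<Sum>i'=Suc i..j. T i i' * c1 i') = e i"
        using c1(1) True by (simp add: sum.atLeast_Suc_atMost)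
      moreover have "T i i * c2 i + (\<Sum>i'=Suc i..j. T i i' * c2 i') = e i"
        using c2(1) True by (simp add: sum.atLeast_Suc_atMost)
      ultimately have "T i i * c1 i = T i i * c2 i" using tail by linarith
      then show ?thesis using diag[OF True] by simp
    qed
  qed
qed

definition Yj_system :: "real \<Rightarrow> nat \<Rightarrow> nat \<Rightarrow> real" where
  "Yj_system B k i = 4 ^ k * pochhammer (- real i) k * pochhammer (- real k) (i - k)
     * pochhammer B k / pochhammer B (i - k)"

lemma Yj_system_diag: "B > 0 \<Longrightarrow> Yj_system B k k \<noteq> 0"
  unfolding Yj_system_def by (auto simp: pochhammer_same pochhammer_eq_0_iff)

lemma ccoef_solves:
  assumes "real m + d / 2 > 0"
  shows "\<forall>k\<le>j. (\<Sum>i=k..j. Yj_system (real m + d / 2) k i * ccoef d m j i) = (if k = j then 1 else 0)"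
proof -
  let ?B = "real m + d / 2" and ?e = "\<lambda>k. if k = j then 1 else (0::real)"
  let ?sys = "\<lambda>c. (\<forall>k\<le>j. (\<Sum>i=k..j. Yj_system ?B k i * c i) = ?e k) \<and> (\<forall>i>j. c i = 0)"
  have diag: "Yj_system ?B k k \<noteq> 0" for k using Yj_system_diag assms by blast
  obtain c where c: "?sys c"
    using upper_triangular_solvable[of j "Yj_system ?B" ?e, OF diag] by blast
  have "ccoef d m j = c"
    unfolding ccoef_def
  proof (rule the_equality)
    show "(\<forall>k\<le>j. 4 ^ k * (\<Sum>i=k..j. pochhammer (- real i) k * pochhammer (- real k) (i - k)
          * pochhammer ?B k / pochhammer ?B (i - k) * c i) = ?e k) \<and> (\<forall>i>j. c i = 0)"
      using c by (simp add: Yj_system_def sum_distrib_left mult.assoc)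
  next
    fix c' assume "(\<forall>k\<le>j. 4 ^ k * (\<Sum>i=k..j. pochhammer (- real i) k * pochhammer (- real k) (i - k)
          * pochhammer ?B k / pochhammer ?B (i - k) * c' i) = ?e k) \<and> (\<forall>i>j. c' i = 0)"
    then have "?sys c'" by (simp add: Yj_system_def sum_distrib_left mult.assoc)
    then show "c' = c"
      using c by (intro upper_triangular_solution_unique[of j "Yj_system ?B" c' ?e c, OF diag]) auto
  qed
  then show ?thesis using c by simp
qed



definition Yj_poly :: "real \<Rightarrow> nat \<Rightarrow> nat \<Rightarrow> real poly" where
  "Yj_poly d m k = (\<Sum>i=0..k. smult (ccoef d m k i) ([:1, -1:] ^ i))"

lemma Yj_eq_radial_mult: "Yj Y m k l = radial_mult (Yj_poly (real DIM('a)) m k) (Y m l :: 'a::euclidean_space \<Rightarrow> real)"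
  unfolding Yj_def Yj_poly_def radial_mult_def
  by (simp add: poly_sum sum_distrib_right mult.assoc fun_eq_iff)

lemma coeff_one_minus_power:
  "coeff ([:1, -1:] ^ i) a = (if a \<le> i then real (i choose a) * (-1) ^ a else (0::real))"
proof (cases "a \<le> i")
  case True
  then show ?thesis using coeff_linear_poly_power[of a i 1 "-1::real"] by simp
next
  case False
  have "degree ([:1::real, -1:] ^ i) \<le> i"
    using degree_power_le[of "[:1::real, -1:]" i] by simp
  then show ?thesis using False by (simp add: coeff_eq_0)
qed

lemma coeff_Yj_poly_eq_0: "k < a \<Longrightarrow> coeff (Yj_poly d m k) a = 0"
  unfolding Yj_poly_def by (simp add: coeff_sum coeff_one_minus_power)

lemma poly_eq_sum_coeffs:
  fixes p :: "real poly"
  assumes "\<And>b. D < b \<Longrightarrow> coeff p b = 0"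
  shows "poly p x = (\<Sum>b\<le>D. coeff p b * x ^ b)"
proof -
  have deg: "degree p \<le> D" using assms by (meson degree_le leI)
  have "poly p x = (\<Sum>b\<le>degree p. coeff p b * x ^ b)" by (rule poly_altdef)
  also have "\<dots> = (\<Sum>b\<le>D. coeff p b * x ^ b)"
    by (rule sum.mono_neutral_left) (use deg in \<open>auto simp: coeff_eq_0\<close>)
  finally show ?thesis .
qed

lemma alternating_binomial_sum_Suc:
  "(\<Sum>b\<le>Suc M. real (Suc M choose b) * (-1) ^ b * f b)
     = (\<Sum>b\<le>M. real (M choose b) * (-1) ^ b * (f b - f (Suc b)))"
proof -
  have A: "(\<Sum>b\<le>Suc M. real (Suc M choose b) * (-1) ^ b * f b)
      = f 0 + (\<Sum>b\<le>M. real (Suc M choose Suc b) * (-1) ^ Suc b * f (Suc b))"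
    by (simp only: sum.atMost_Suc_shift) simp
  have B: "(\<Sum>b\<le>M. real (Suc M choose Suc b) * (-1) ^ Suc b * f (Suc b))
      = (\<Sum>b\<le>M. real (M choose b) * (-1) ^ Suc b * f (Suc b))
          + (\<Sum>b\<le>M. real (M choose Suc b) * (-1) ^ Suc b * f (Suc b))"
    by (simp only: binomial_Suc_Suc of_nat_add distrib_right sum.distrib)
  have C: "(\<Sum>b\<le>Suc M. real (M choose b) * (-1) ^ b * f b)
      = f 0 + (\<Sum>b\<le>M. real (M choose Suc b) * (-1) ^ Suc b * f (Suc b))"
    by (simp only: sum.atMost_Suc_shift) simp
  have D: "(\<Sum>b\<le>Suc M. real (M choose b) * (-1) ^ b * f b) = (\<Sum>b\<le>M. real (M choose b) * (-1) ^ b * f b)"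
    by simp
  have E: "(\<Sum>b\<le>M. real (M choose b) * (-1) ^ b * (f b - f (Suc b)))
      = (\<Sum>b\<le>M. real (M choose b) * (-1) ^ b * f b) + (\<Sum>b\<le>M. real (M choose b) * (-1) ^ Suc b * f (Suc b))"
    by (simp add: sum.distrib[symmetric] algebra_simps)
  show ?thesis using A B C D E by simp
qed

lemma alternating_binomial_sum_pochhammer:
  assumes "B > 0"
  shows "(\<Sum>b\<le>M. real (M choose b) * (-1) ^ b * pochhammer (B + real b) r)
        = pochhammer (- real r) M * pochhammer B r / pochhammer B M"
  using assms
proof (induction M arbitrary: B r)
  case 0
  then show ?case by simp
next
  case (Suc M)
  show ?case
  proof (cases r)
    case 0
    then show ?thesis unfolding alternating_binomial_sum_Suc by (simp add: pochhammer_0_left)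
  next
    case (Suc r')
    have diff: "pochhammer (B + real b) r - pochhammer (B + real (Suc b)) r
        = - (real r' + 1) * pochhammer (B + 1 + real b) r'" for b
    proof -
      have "pochhammer (B + real b) r = (B + real b) * pochhammer (B + real b + 1) r'"
        by (simp add: Suc pochhammer_rec)
      moreover have "pochhammer (B + real (Suc b)) r = (B + real b + 1 + real r') * pochhammer (B + real b + 1) r'"
        by (simp add: Suc pochhammer_rec' add_ac)
      ultimately show ?thesis by (simp add: algebra_simps)
    qed
    have "(\<Sum>b\<le>Suc M. real (Suc M choose b) * (-1) ^ b * pochhammer (B + real b) r)
        = - (real r' + 1) * (\<Sum>b\<le>M. real (M choose b) * (-1) ^ b * pochhammer ((B + 1) + real b) r')"
      unfolding alternating_binomial_sum_Suc diff by (simp add: sum_distrib_left algebra_simps)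
    also have "\<dots> = - (real r' + 1) * (pochhammer (- real r') M * pochhammer (B + 1) r' / pochhammer (B + 1) M)"
      using Suc.IH[of "B + 1" r'] Suc.prems by simp
    also have "\<dots> = pochhammer (- real r) (Suc M) * pochhammer B r / pochhammer B (Suc M)"
    proof -
      have "pochhammer (- real r) (Suc M) = - (real r' + 1) * pochhammer (- real r') M"
        by (simp add: Suc pochhammer_rec add_ac)
      moreover have "pochhammer B r = B * pochhammer (B + 1) r'" by (simp add: Suc pochhammer_rec)
      moreover have "pochhammer B (Suc M) = B * pochhammer (B + 1) M" by (simp add: pochhammer_rec)
      ultimately show ?thesis using Suc.prems by simp
    qed
    finally show ?thesis .
  qed
qed

lemma radial_lap_pow_one_minus_power_eq_0:
  "i < k \<Longrightarrow> (radial_lap B ^^ k) ([:1, -1:] ^ i) = 0"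
  by (rule poly_eqI) (simp add: coeff_radial_lap_pow coeff_one_minus_power)

lemma poly_radial_lap_pow_one_minus_power_1:
  assumes "k \<le> i" "B > 0"
  shows "poly ((radial_lap B ^^ k) ([:1, -1:] ^ i)) 1 = Yj_system B k i"
proof -
  define M where "M = i - k"
  have iM: "i = M + k" using assms M_def by simp
  have "poly ((radial_lap B ^^ k) ([:1, -1:] ^ i)) 1 = (\<Sum>b\<le>M. coeff ((radial_lap B ^^ k) ([:1, -1:] ^ i)) b * 1 ^ b)"
    by (rule poly_eq_sum_coeffs) (simp add: coeff_radial_lap_pow coeff_one_minus_power iM)
  also have "\<dots> = (\<Sum>b\<le>M. 4 ^ k * (-1) ^ k * (fact i / fact M) * (real (M choose b) * (-1) ^ b * pochhammer (B + real b) k))"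
  proof (rule sum.cong[OF refl])
    fix b assume "b \<in> {..M}"
    then have bM: "b \<le> M" by simp
    have c1: "real ((M + k) choose (b + k)) = fact (M + k) / (fact (b + k) * fact (M - b))"
      using bM by (simp add: binomial_fact)
    have c2: "real (M choose b) = fact M / (fact b * fact (M - b))"
      using bM by (simp add: binomial_fact)
    have s: "(-1::real) ^ (b + k) = (-1) ^ k * (-1) ^ b" by (simp add: power_add)
    have p1: "pochhammer (1 + real b) k = fact (b + k) / fact b"
      using pochhammer_of_nat_plus_1[of b k] by (simp add: add.commute)
    show "coeff ((radial_lap B ^^ k) ([:1, -1:] ^ i)) b * 1 ^ b
        = 4 ^ k * (-1) ^ k * (fact i / fact M) * (real (M choose b) * (-1) ^ b * pochhammer (B + real b) k)"
      unfolding iM using bM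
      by (simp add: coeff_radial_lap_pow coeff_one_minus_power p1 c1 c2 s add.commute field_simps)
  qed
  also have "\<dots> = 4 ^ k * (-1) ^ k * (fact i / fact M) * (\<Sum>b\<le>M. real (M choose b) * (-1) ^ b * pochhammer (B + real b) k)"
    by (simp add: sum_distrib_left)
  also have "\<dots> = 4 ^ k * (-1) ^ k * (fact i / fact M) * (pochhammer (- real k) M * pochhammer B k / pochhammer B M)"
    using alternating_binomial_sum_pochhammer[OF assms(2)] by simp
  also have "\<dots> = Yj_system B k i"
  proof -
    have "pochhammer (- real i) k = (-1) ^ k * pochhammer (real i - real k + 1) k"
      by (rule pochhammer_minus)
    also have "real i - real k + 1 = real M + 1" using iM by simp
    also have "pochhammer (real M + 1) k = fact i / fact M" using iM by (simp add: pochhammer_of_nat_plus_1)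
    finally have "pochhammer (- real i) k = (-1) ^ k * (fact i / fact M)" .
    then show ?thesis unfolding Yj_system_def M_def by simp
  qed
  finally show ?thesis .
qed

lemma poly_radial_lap_pow_Yj_poly_1:
  assumes B: "real m + d / 2 > 0"
  shows "poly ((radial_lap (real m + d / 2) ^^ r) (Yj_poly d m k)) 1 = (if r = k then 1 else 0)"
proof -
  let ?B = "real m + d / 2"
  let ?v = "\<lambda>i. poly ((radial_lap ?B ^^ r) ([:1, -1:] ^ i)) 1"
  have "poly ((radial_lap ?B ^^ r) (Yj_poly d m k)) 1 = (\<Sum>i=0..k. ccoef d m k i * ?v i)"
    unfolding Yj_poly_def by (simp add: radial_lap_pow_sum radial_lap_pow_smult poly_sum)
  also have "\<dots> = (if r = k then 1 else 0)"
  proof (cases "r \<le> k")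
    case True
    have "{0..k} = {0..<r} \<union> {r..k}" using True by auto
    then have "(\<Sum>i=0..k. ccoef d m k i * ?v i) = (\<Sum>i=0..<r. ccoef d m k i * ?v i) + (\<Sum>i=r..k. ccoef d m k i * ?v i)"
      by (simp only:) (rule sum.union_disjoint, auto)
    also have "(\<Sum>i=0..<r. ccoef d m k i * ?v i) = 0"
      by (intro sum.neutral) (auto simp: radial_lap_pow_one_minus_power_eq_0)
    also have "(\<Sum>i=r..k. ccoef d m k i * ?v i) = (\<Sum>i=r..k. Yj_system ?B r i * ccoef d m k i)"
      by (rule sum.cong) (auto simp: poly_radial_lap_pow_one_minus_power_1 B)
    also have "\<dots> = (if r = k then 1 else 0)" using ccoef_solves[OF B, of k] True by blast
    finally show ?thesis by simp
  next
    case False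
    then show ?thesis by (auto intro!: sum.neutral simp: radial_lap_pow_one_minus_power_eq_0)
  qed
  finally show ?thesis .
qed

lemma radial_lap_pow_Yj_poly_eq_0: "k < r \<Longrightarrow> (radial_lap B ^^ r) (Yj_poly d m k) = 0"
  by (rule poly_eqI) (simp add: coeff_radial_lap_pow coeff_Yj_poly_eq_0)

lemma radial_lap_pow_Yj_poly_self:
  assumes B: "real m + d / 2 > 0"
  shows "(radial_lap (real m + d / 2) ^^ k) (Yj_poly d m k) = 1"
proof (rule poly_eqI)
  fix b
  let ?p = "(radial_lap (real m + d / 2) ^^ k) (Yj_poly d m k)"
  have high: "coeff ?p b = 0" if "b > 0" for b
    using that by (simp add: coeff_radial_lap_pow coeff_Yj_poly_eq_0)
  have "poly ?p 1 = (\<Sum>b\<le>0. coeff ?p b * 1 ^ b)"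
    by (rule poly_eq_sum_coeffs) (simp add: high)
  then have "coeff ?p 0 = 1" using poly_radial_lap_pow_Yj_poly_1[OF B, of k k] by simp
  then show "coeff ?p b = coeff 1 b" using high by (cases b) simp_all
qed

subsection \<open>The radial profiles of \<open>P^{\<mu>,n}_j\<close> and \<open>Q^{-s,n}_j\<close>\<close>

definition genP_poly :: "real \<Rightarrow> real \<Rightarrow> nat \<Rightarrow> nat \<Rightarrow> real poly" where
  "genP_poly d \<mu> n j = smult (pochhammer (real n - real j + d / 2) j)
     (jacobi_poly \<mu> (real n - 2 * real j + d / 2 - 1) j)"

lemma genP_poly_0 [simp]: "genP_poly d \<mu> n 0 = 1"
  by (simp add: genP_poly_def)

lemma radial_lap_pow_genP_poly:
  assumes d: "2 \<le> d" and jn: "2 * j \<le> n" and kj: "k \<le> j" and \<mu>: "- \<mu> \<le> real (j + k)"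
  shows "(radial_lap (real (n - 2 * j) + d / 2) ^^ k) (genP_poly d \<mu> n j)
       = smult (4 ^ k * pochhammer (real n - 2 * real k + d / 2) (2 * k))
           (genP_poly d (\<mu> + 2 * real k) (n - 2 * k) (j - k))"
proof -
  define \<beta> where "\<beta> = real n - 2 * real j + d / 2 - 1"
  define z where "z = real n - real j - real k + d / 2"
  have jn': "2 * real j \<le> real n" using jn by (metis of_nat_le_iff of_nat_mult of_nat_numeral)
  have \<beta>: "0 \<le> \<beta>" using d jn' unfolding \<beta>_def by simp
  have B: "real (n - 2 * j) + d / 2 = \<beta> + 1" using jn by (simp add: \<beta>_def of_nat_diff)
  have source: "genP_poly d \<mu> n j = smult (pochhammer (z + real k) j) (jacobi_poly \<mu> \<beta> j)"
    by (simp add: genP_poly_def z_def \<beta>_def algebra_simps)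
  have target: "genP_poly d (\<mu> + 2 * real k) (n - 2 * k) (j - k)
      = smult (pochhammer z (j - k)) (jacobi_poly (\<mu> + 2 * real k) \<beta> (j - k))"
    using kj jn by (simp add: genP_poly_def z_def \<beta>_def of_nat_diff algebra_simps)
  have lowered: "(radial_lap (\<beta> + 1) ^^ k) (jacobi_poly \<mu> \<beta> j)
      = smult (4 ^ k * pochhammer z k) (jacobi_poly (\<mu> + 2 * real k) \<beta> (j - k))"
    using radial_lap_pow_jacobi_poly[OF \<beta> kj \<mu>] by (simp add: z_def \<beta>_def algebra_simps)
  have "pochhammer (z + real k) j * pochhammer z k = pochhammer z (k + j)"
    by (simp add: pochhammer_product' mult.commute)
  also have "\<dots> = pochhammer z (j - k) * pochhammer (z + real (j - k)) (2 * k)"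
    using pochhammer_product'[of z "j - k" "2 * k"] kj by simp
  also have "z + real (j - k) = real n - 2 * real k + d / 2"
    using kj by (simp add: z_def of_nat_diff)
  finally have const: "pochhammer (z + real k) j * pochhammer z k
      = pochhammer z (j - k) * pochhammer (real n - 2 * real k + d / 2) (2 * k)" .
  then have coeffs: "pochhammer (z + real k) j * (4 ^ k * pochhammer z k)
      = 4 ^ k * pochhammer (real n - 2 * real k + d / 2) (2 * k) * pochhammer z (j - k)"
    by (metis mult.assoc mult.commute)
  show ?thesis
    unfolding B source target radial_lap_pow_smult lowered smult_smult coeffs ..
qed

lemma poly_radial_lap_pow_genP_poly_1_eq_0:
  assumes d: "2 \<le> d" and jn: "2 * j \<le> n" and kj: "k \<le> j" and ks: "2 * k < s" "s \<le> j + k"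
  shows "poly ((radial_lap (real (n - 2 * j) + d / 2) ^^ k) (genP_poly d (- real s) n j)) 1 = 0"
proof -
  let ?\<alpha> = "- real s + 2 * real k" and ?\<beta> = "real (n - 2 * k) - 2 * real (j - k) + d / 2 - 1"
  have "pochhammer (?\<alpha> + 1) (j - k) = 0"
    unfolding pochhammer_eq_0_iff using ks by (intro exI[of _ "s - 2 * k - 1"]) (simp add: of_nat_diff)
  moreover have "0 \<le> ?\<beta>" using d jn kj by (simp add: of_nat_diff)
  moreover have "- ?\<alpha> \<le> real (j - k)" using ks by (simp add: of_nat_diff)
  ultimately have "poly (jacobi_poly ?\<alpha> ?\<beta> (j - k)) 1 = 0"
    by (intro poly_jacobi_poly_1_eq_0)
  moreover have "- (- real s) \<le> real (j + k)" using ks by simp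
  then have "(radial_lap (real (n - 2 * j) + d / 2) ^^ k) (genP_poly d (- real s) n j)
      = smult (4 ^ k * pochhammer (real n - 2 * real k + d / 2) (2 * k))
          (genP_poly d ?\<alpha> (n - 2 * k) (j - k))"
    by (rule radial_lap_pow_genP_poly[OF d jn kj])
  ultimately show ?thesis by (simp add: genP_poly_def)
qed

definition Q_poly :: "real \<Rightarrow> nat \<Rightarrow> nat \<Rightarrow> nat \<Rightarrow> real poly" where
  "Q_poly d s n j =
    (let m = n - 2 * j; P = genP_poly d (- real s) n j; c = s - s div 2 in
     if s \<le> j then P
     else if c \<le> j then
       P - (\<Sum>k<c. smult (poly ((radial_lap (real m + d / 2) ^^ k) P) 1) (Yj_poly d m k))
     else Yj_poly d m j)"

context
  fixes d :: real and s n j :: nat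
  assumes d: "2 \<le> d" and jn: "2 * j \<le> n"
begin

lemma poly_radial_lap_pow_Q_poly_1:
  assumes k: "k < s - s div 2"
  shows "poly ((radial_lap (real (n - 2 * j) + d / 2) ^^ k) (Q_poly d s n j)) 1 = (if j = k then 1 else 0)"
proof -
  let ?L = "radial_lap (real (n - 2 * j) + d / 2)" and ?P = "genP_poly d (- real s) n j"
  let ?c = "s - s div 2"
  have B: "real (n - 2 * j) + d / 2 > 0" using d by simp
  have ks: "2 * k < s" "?c \<le> s" using k by presburger+
  consider "s \<le> j" | "\<not> s \<le> j" "?c \<le> j" | "j < ?c" by linarith
  then show ?thesis
  proof cases
    case 1
    then have "poly ((?L ^^ k) ?P) 1 = 0"
      using ks k by (intro poly_radial_lap_pow_genP_poly_1_eq_0[OF d jn]) auto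
    then show ?thesis using 1 ks k by (simp add: Q_poly_def Let_def)
  next
    case 2
    have "poly ((?L ^^ k) (Q_poly d s n j)) 1
        = poly ((?L ^^ k) ?P) 1 - (\<Sum>k'<?c. poly ((?L ^^ k') ?P) 1 * poly ((?L ^^ k) (Yj_poly d (n - 2 * j) k')) 1)"
      using 2 by (simp add: Q_poly_def Let_def radial_lap_pow_diff radial_lap_pow_sum radial_lap_pow_smult poly_sum)
    also have "(\<Sum>k'<?c. poly ((?L ^^ k') ?P) 1 * poly ((?L ^^ k) (Yj_poly d (n - 2 * j) k')) 1)
        = poly ((?L ^^ k) ?P) 1"
    proof -
      have "(\<Sum>k'<?c. poly ((?L ^^ k') ?P) 1 * poly ((?L ^^ k) (Yj_poly d (n - 2 * j) k')) 1)
          = (\<Sum>k'<?c. if k = k' then poly ((?L ^^ k') ?P) 1 else 0)"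
        by (rule sum.cong) (auto simp: poly_radial_lap_pow_Yj_poly_1[OF B])
      then show ?thesis using k by simp
    qed
    moreover have "j \<noteq> k" using 2 k by linarith
    ultimately show ?thesis by simp
  next
    case 3
    then have "\<not> s \<le> j" by linarith
    then show ?thesis
      using 3 by (simp add: Q_poly_def Let_def poly_radial_lap_pow_Yj_poly_1[OF B])
  qed
qed

lemma radial_lap_pow_Q_poly:
  assumes sj: "s \<le> 2 * j"
  shows "(radial_lap (real (n - 2 * j) + d / 2) ^^ (s div 2)) (Q_poly d s n j)
       = smult (4 ^ (s div 2) * pochhammer (real n - 2 * real (s div 2) + d / 2) (2 * (s div 2)))
           (genP_poly d (- real s + 2 * real (s div 2)) (n - 2 * (s div 2)) (j - s div 2))"
proof -
  let ?L = "radial_lap (real (n - 2 * j) + d / 2)" and ?P = "genP_poly d (- real s) n j"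
  let ?c = "s - s div 2" and ?R = "s div 2"
  have c: "?c \<le> j" "?R \<le> j" "s \<le> j + ?R" using sj by presburger+
  have "(?L ^^ ?R) (Q_poly d s n j) = (?L ^^ ?R) ?P"
  proof (cases "s \<le> j")
    case True
    then show ?thesis by (simp add: Q_poly_def Let_def)
  next
    case False
    have "(?L ^^ ?R) (smult (poly ((?L ^^ k) ?P) 1) (Yj_poly d (n - 2 * j) k)) = 0"
      if "k < ?c" for k
    proof (cases "k < ?R")
      case True
      then show ?thesis by (simp add: radial_lap_pow_smult radial_lap_pow_Yj_poly_eq_0)
    next
      case False
      then have "k = ?R" "2 * k < s" using that by presburger+
      then have "poly ((?L ^^ k) ?P) 1 = 0"
        using c by (intro poly_radial_lap_pow_genP_poly_1_eq_0[OF d jn]) auto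
      then show ?thesis using radial_lap_pow_smult[where c = 0] by simp
    qed
    then show ?thesis
      using False c by (simp add: Q_poly_def Let_def radial_lap_pow_diff radial_lap_pow_sum)
  qed
  also have "\<dots> = smult (4 ^ ?R * pochhammer (real n - 2 * real ?R + d / 2) (2 * ?R))
      (genP_poly d (- real s + 2 * real ?R) (n - 2 * ?R) (j - ?R))"
    using c by (intro radial_lap_pow_genP_poly[OF d jn]) auto
  finally show ?thesis .
qed

lemma radial_lap_pow_Q_poly_diag:
  assumes "s = 2 * j + 1"
  shows "(radial_lap (real (n - 2 * j) + d / 2) ^^ j) (Q_poly d s n j) = 1"
proof -
  have "Q_poly d s n j = Yj_poly d (n - 2 * j) j"
    using assms by (simp add: Q_poly_def Let_def)
  then show ?thesis using d by (simp add: radial_lap_pow_Yj_poly_self)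
qed

lemma radial_lap_pow_Q_poly_eq_0:
  assumes "2 * j + 1 < s"
  shows "(radial_lap (real (n - 2 * j) + d / 2) ^^ (s div 2)) (Q_poly d s n j) = 0"
proof -
  have "\<not> s \<le> j" "\<not> s - s div 2 \<le> j" "j < s div 2"
    using assms by presburger+
  moreover have "Q_poly d s n j = Yj_poly d (n - 2 * j) j"
    using calculation by (simp add: Q_poly_def Let_def)
  ultimately show ?thesis by (simp add: radial_lap_pow_Yj_poly_eq_0)
qed

end

subsection \<open>Back to functions on \<open>R^d\<close>\<close>

lemma genP_eq_radial_mult:
  fixes Y :: "nat \<Rightarrow> nat \<Rightarrow> 'a::euclidean_space \<Rightarrow> real"
  assumes "2 * j \<le> n"
  shows "genP Y \<mu> (int n) (int j) l = radial_mult (genP_poly (real DIM('a)) \<mu> n j) (Y (n - 2 * j) l)"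
proof
  fix x :: 'a
  have "nat (int n - 2 * int j) = n - 2 * j" using assms by simp
  then show "genP Y \<mu> (int n) (int j) l x = radial_mult (genP_poly (real DIM('a)) \<mu> n j) (Y (n - 2 * j) l) x"
    using assms
    by (simp add: genP_def radial_mult_def genP_poly_def jac_hat_eq_poly_jacobi_poly[symmetric])
qed

lemma genP_negative_index: "j < 0 \<Longrightarrow> genP Y \<mu> n j l = (\<lambda>x. 0)"
  by (simp add: genP_def fun_eq_iff)

lemma sph_inner_self_nonzero_nonvanishing:
  fixes f :: "'a::euclidean_space \<Rightarrow> real"
  assumes "sph_inner f f \<noteq> 0"
  shows "\<exists>\<xi>\<in>sphere 0 1. f \<xi> \<noteq> 0"
proof (rule ccontr)
  assume "\<not> ?thesis"
  then have "integral (ball 0 1) (\<lambda>x. f (x /\<^sub>R norm x) * f (x /\<^sub>R norm x)) = integral (ball (0::'a) 1) (\<lambda>x. 0)"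
    by (intro integral_spike[of "{0}"]) auto
  then have "sph_inner f f = 0" unfolding sph_inner_def by simp
  with assms show False by simp
qed

lemma the_sphere_factor_radial_mult:
  assumes "\<exists>\<xi>\<in>sphere 0 1. f \<xi> \<noteq> 0"
  shows "(THE \<gamma>. \<forall>\<xi>\<in>sphere 0 1. radial_mult p f \<xi> = \<gamma> * f \<xi>) = poly p 1"
proof (rule the_equality)
  show "\<forall>\<xi>\<in>sphere 0 1. radial_mult p f \<xi> = poly p 1 * f \<xi>" by (simp add: radial_mult_sphere)
next
  fix \<gamma> assume \<gamma>: "\<forall>\<xi>\<in>sphere 0 1. radial_mult p f \<xi> = \<gamma> * f \<xi>"
  obtain \<xi> where \<xi>: "\<xi> \<in> sphere 0 1" "f \<xi> \<noteq> 0" using assms by blast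
  then have "radial_mult p f \<xi> = \<gamma> * f \<xi>" using \<gamma> by blast
  then have "poly p 1 * f \<xi> = \<gamma> * f \<xi>" using \<xi>(1) by (simp only: radial_mult_sphere)
  then show "\<gamma> = poly p 1" using \<xi>(2) by simp
qed

lemma nat_ceiling_half: "nat \<lceil>real s / 2\<rceil> = s - s div 2"
proof (cases "even s")
  case True
  then show ?thesis by (auto elim!: evenE)
next
  case False
  then obtain r where s: "s = 2 * r + 1" using oddE by blast
  have "\<lceil>real s / 2\<rceil> = int r + 1" by (rule ceiling_unique) (simp_all add: s)
  then show ?thesis using s by simp
qed

context
  fixes Y :: "nat \<Rightarrow> nat \<Rightarrow> 'a::euclidean_space \<Rightarrow> real" and s n j l :: nat
  assumes dim: "2 \<le> DIM('a)" and jn: "2 * j \<le> n"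
    and harmonic: "Y (n - 2 * j) l \<in> harmonic_space (n - 2 * j)"
    and nonvanishing: "\<exists>\<xi>\<in>sphere 0 1. Y (n - 2 * j) l \<xi> \<noteq> 0"
begin

lemma gamma_eq_poly:
  "gamma Y s n j l k = poly ((radial_lap (real (n - 2 * j) + real DIM('a) / 2) ^^ k)
     (genP_poly (real DIM('a)) (- real s) n j)) 1"
  unfolding gamma_def genP_eq_radial_mult[OF jn] laplacian_pow_radial_mult[OF harmonic]
  by (rule the_sphere_factor_radial_mult[OF nonvanishing])

lemma Q_eq_radial_mult: "Q Y s n j l = radial_mult (Q_poly (real DIM('a)) s n j) (Y (n - 2 * j) l)"
  unfolding Q_def Q_poly_def Let_def nat_ceiling_half genP_eq_radial_mult[OF jn] Yj_eq_radial_mult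
    gamma_eq_poly
  by (simp add: radial_mult_def poly_sum sum_distrib_left sum_distrib_right algebra_simps fun_eq_iff)

lemma laplacian_pow_Q:
  "(laplacian ^^ k) (Q Y s n j l)
     = radial_mult ((radial_lap (real (n - 2 * j) + real DIM('a) / 2) ^^ k) (Q_poly (real DIM('a)) s n j))
         (Y (n - 2 * j) l)"
  unfolding Q_eq_radial_mult by (rule laplacian_pow_radial_mult[OF harmonic])

lemma laplacian_pow_Q_sphere:
  assumes "k < nat \<lceil>real s / 2\<rceil>" and "\<xi> \<in> sphere 0 1"
  shows "(laplacian ^^ k) (Q Y s n j l) \<xi> = (if j = k then 1 else 0) * Y (n - 2 * j) l \<xi>"
proof -
  have "k < s - s div 2" using assms(1) by (simp add: nat_ceiling_half)
  then have "poly ((radial_lap (real (n - 2 * j) + real DIM('a) / 2) ^^ k) (Q_poly (real DIM('a)) s n j)) 1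
      = (if j = k then 1 else 0)"
    using dim by (intro poly_radial_lap_pow_Q_poly_1[OF _ jn]) simp_all
  then show ?thesis using assms(2) by (simp add: laplacian_pow_Q radial_mult_sphere)
qed

lemma laplacian_pow_Q_even:
  assumes "even s"
  shows "(laplacian ^^ (s div 2)) (Q Y s n j l) =
    (\<lambda>x. 2 ^ s * pochhammer (real n + real DIM('a) / 2 - real s) s
         * genP Y 0 (int n - int s) (int j - int s div 2) l x)"
proof (cases "s \<le> 2 * j")
  case True
  obtain R where s: "s = 2 * R" using assms by blast
  have d: "2 \<le> real DIM('a)" using dim by simp
  have R: "s div 2 = R" "2 * R = s" "- real s + 2 * real R = 0" "(4::real) ^ R = 2 ^ s"
    "real n - 2 * real R + real DIM('a) / 2 = real n + real DIM('a) / 2 - real s"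
    using s by (simp_all add: power_mult)
  have top: "(radial_lap (real (n - 2 * j) + real DIM('a) / 2) ^^ R) (Q_poly (real DIM('a)) s n j)
      = smult (2 ^ s * pochhammer (real n + real DIM('a) / 2 - real s) s)
          (genP_poly (real DIM('a)) 0 (n - s) (j - R))"
    using radial_lap_pow_Q_poly[OF d jn True] unfolding R .
  have ints: "int n - int s = int (n - s)" "int j - int s div 2 = int (j - R)"
    and index: "n - s - 2 * (j - R) = n - 2 * j"
    using True jn by (simp_all add: s)
  have "genP Y 0 (int (n - s)) (int (j - R)) l
      = radial_mult (genP_poly (real DIM('a)) 0 (n - s) (j - R)) (Y (n - s - 2 * (j - R)) l)"
    by (rule genP_eq_radial_mult) (use True jn in \<open>simp add: s\<close>)
  then show ?thesis
    unfolding laplacian_pow_Q R(1) top ints index by (simp add: radial_mult_def fun_eq_iff)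
next
  case False
  then have "2 * j + 1 < s" "int j - int s div 2 < 0" using assms by presburger+
  then show ?thesis
    using radial_lap_pow_Q_poly_eq_0[of "real DIM('a)" j n s] dim jn
    by (simp add: laplacian_pow_Q genP_negative_index radial_mult_def fun_eq_iff)
qed

lemma laplacian_pow_Q_odd:
  assumes "odd s" "j \<noteq> s div 2"
  shows "(laplacian ^^ (s div 2)) (Q Y s n j l) =
    (\<lambda>x. 2 ^ (s - 1) * pochhammer (real n + real DIM('a) / 2 - real s + 1) (s - 1)
         * genP Y (-1) (int n - int s + 1) (int j - (int s - 1) div 2) l x)"
proof (cases "s \<le> 2 * j")
  case True
  obtain R where s: "s = 2 * R + 1" using assms by (blast elim: oddE)
  have d: "2 \<le> real DIM('a)" using dim by simp
  have R: "s div 2 = R" "2 * R = s - 1" "- real s + 2 * real R = -1" "(4::real) ^ R = 2 ^ (s - 1)"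
    "real n - 2 * real R + real DIM('a) / 2 = real n + real DIM('a) / 2 - real s + 1"
    using s by (simp_all add: power_mult)
  have top: "(radial_lap (real (n - 2 * j) + real DIM('a) / 2) ^^ R) (Q_poly (real DIM('a)) s n j)
      = smult (2 ^ (s - 1) * pochhammer (real n + real DIM('a) / 2 - real s + 1) (s - 1))
          (genP_poly (real DIM('a)) (-1) (n - (s - 1)) (j - R))"
    using radial_lap_pow_Q_poly[OF d jn True] unfolding R .
  have ints: "int n - int s + 1 = int (n - (s - 1))" "int j - (int s - 1) div 2 = int (j - R)"
    and index: "n - (s - 1) - 2 * (j - R) = n - 2 * j"
    using True jn by (simp_all add: s)
  have "genP Y (-1) (int (n - (s - 1))) (int (j - R)) l
      = radial_mult (genP_poly (real DIM('a)) (-1) (n - (s - 1)) (j - R)) (Y (n - (s - 1) - 2 * (j - R)) l)"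
    by (rule genP_eq_radial_mult) (use True jn in \<open>simp add: s\<close>)
  then show ?thesis
    unfolding laplacian_pow_Q R(1) top ints index by (simp add: radial_mult_def fun_eq_iff)
next
  case False
  then have "2 * j + 1 < s" "int j - (int s - 1) div 2 < 0" using assms by presburger+
  then show ?thesis
    using radial_lap_pow_Q_poly_eq_0[of "real DIM('a)" j n s] dim jn
    by (simp add: laplacian_pow_Q genP_negative_index radial_mult_def fun_eq_iff)
qed

lemma laplacian_pow_Q_odd_diag:
  assumes "odd s" "j = s div 2"
  shows "(laplacian ^^ (s div 2)) (Q Y s n j l) = Y (n - 2 * (s div 2)) l
    \<and> Y (n - 2 * (s div 2)) l = genP Y (-1) (int n - int s + 1) 0 l"
proof
  have d: "2 \<le> real DIM('a)" using dim by simp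
  have s: "s = 2 * j + 1" and R: "s div 2 = j" using assms by simp_all
  show "(laplacian ^^ (s div 2)) (Q Y s n j l) = Y (n - 2 * (s div 2)) l"
    using radial_lap_pow_Q_poly_diag[OF d jn s]
    by (simp add: R laplacian_pow_Q radial_mult_def fun_eq_iff)
  have "int n - int s + 1 = int (n - 2 * j)" using jn s by simp
  then show "Y (n - 2 * (s div 2)) l = genP Y (-1) (int n - int s + 1) 0 l"
    using genP_eq_radial_mult[of 0 "n - 2 * j" Y "-1" l]
    by (simp add: R radial_mult_def fun_eq_iff)
qed

end

theorem lemma3p7:
  fixes Y :: "nat \<Rightarrow> nat \<Rightarrow> 'a::euclidean_space \<Rightarrow> real"
    and N :: "nat \<Rightarrow> nat"
    and s n j l :: nat
  assumes "DIM('a) \<ge> 2"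
    and "orthonormal_harmonic_basis N Y"
    and "1 \<le> s"
    and "2 * j \<le> n"
    and "1 \<le> l" and "l \<le> N (n - 2 * j)"
  shows "(\<forall>k. k \<le> nat \<lceil>real s / 2\<rceil> - 1 \<longrightarrow>
            (\<forall>\<xi>\<in>sphere 0 1. (laplacian ^^ k) (Q Y s n j l) \<xi> = (if j = k then 1 else 0) * Y (n - 2 * j) l \<xi>))
       \<and> (even s \<longrightarrow>
            (laplacian ^^ (s div 2)) (Q Y s n j l) =
              (\<lambda>x. 2 ^ s * pochhammer (real n + real DIM('a) / 2 - real s) s
                   * genP Y 0 (int n - int s) (int j - int s div 2) l x))
       \<and> (odd s \<longrightarrow>
            (j \<noteq> s div 2 \<longrightarrow>
               (laplacian ^^ (s div 2)) (Q Y s n j l) =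
                 (\<lambda>x. 2 ^ (s - 1) * pochhammer (real n + real DIM('a) / 2 - real s + 1) (s - 1)
                      * genP Y (-1) (int n - int s + 1) (int j - (int s - 1) div 2) l x))
          \<and> (j = s div 2 \<longrightarrow>
               (laplacian ^^ (s div 2)) (Q Y s n j l) = Y (n - 2 * (s div 2)) l
               \<and> Y (n - 2 * (s div 2)) l = genP Y (-1) (int n - int s + 1) 0 l))"
proof -
  have "l \<in> {1..N (n - 2 * j)}" using assms(5,6) by simp
  then have harmonic: "Y (n - 2 * j) l \<in> harmonic_space (n - 2 * j)"
    and "sph_inner (Y (n - 2 * j) l) (Y (n - 2 * j) l) = 1"
    using assms(2) unfolding orthonormal_harmonic_basis_def by auto
  then have "\<exists>\<xi>\<in>sphere 0 1. Y (n - 2 * j) l \<xi> \<noteq> 0"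
    by (intro sph_inner_self_nonzero_nonvanishing) simp
  note setting = assms(1,4) harmonic this
  have "k < nat \<lceil>real s / 2\<rceil>" if "k \<le> nat \<lceil>real s / 2\<rceil> - 1" for k
    using that assms(3) unfolding nat_ceiling_half by presburger
  then show ?thesis
    using laplacian_pow_Q_sphere[where Y = Y and n = n and j = j and l = l, OF setting]
      laplacian_pow_Q_even[where Y = Y and n = n and j = j and l = l, OF setting]
      laplacian_pow_Q_odd[where Y = Y and n = n and j = j and l = l, OF setting]
      laplacian_pow_Q_odd_diag[where Y = Y and n = n and j = j and l = l, OF setting]
    by blast
qed

end
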